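(* Let $\mathbf A$ be a finite subdirectly irreducible cBCK-algebra, let $\mathcal K$ be a cover of $\mathcal V(\mathbf A)$ in the lattice of varieties of cBCK-algebras, and let $\mathbf B$ be a subdirectly irreducible member of $\mathcal K$. Then $\mathrm{h}(\mathbf B)\le \mathrm{h}(\mathbf A)+1$.
   Context: A BCK-algebra is an algebra $(A,\ominus,0)$ of type $(2,0)$ satisfying $((x\ominus y)\ominus(x\ominus z))\ominus(z\ominus y)=0$, $x\ominus 0=x$, $0\ominus x=0$, and ($x\ominus y=0$ and $y\ominus x=0$ imply $x=y$); it is ordered by $x\le y$ iff $x\ominus y=0$. A cBCK-algebra is a BCK-algebra satisfying $x\ominus(x\ominus y)=y\ominus(y\ominus x)$; cBCK-algebras form a variety. For an element $a$, $\mathrm{h}(a)=|[0,a]|-1$ (possibly infinite), and $\mathrm{h}(\mathbf B)=\sup\{\mathrm{h}(b)\mid b\in B\}$. $\mathcal V(\mathbf A)$ is the variety generated by $\mathbf A$. A cover of a variety $\mathcal V$ is a variety $\mathcal K\supsetneq\mathcal V$ such that no variety lies strictly between $\mathcal V$ and $\mathcal K$. *)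

theory Defs
  imports Main "HOL-Library.Extended_Nat"
begin

record 'a alg =
  carrier :: "'a set"
  sub :: "'a \<Rightarrow> 'a \<Rightarrow> 'a"
  zer :: 'a

definition is_cBCK :: "'a alg \<Rightarrow> bool" where
  "is_cBCK A \<longleftrightarrow>
     zer A \<in> carrier A \<and>
     (\<forall>x\<in>carrier A. \<forall>y\<in>carrier A. sub A x y \<in> carrier A) \<and>
     (\<forall>x\<in>carrier A. \<forall>y\<in>carrier A. \<forall>z\<in>carrier A.
        sub A (sub A (sub A x y) (sub A x z)) (sub A z y) = zer A) \<and>
     (\<forall>x\<in>carrier A. sub A x (zer A) = x) \<and>
     (\<forall>x\<in>carrier A. sub A (zer A) x = zer A) \<and>
     (\<forall>x\<in>carrier A. \<forall>y\<in>carrier A.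
        sub A x y = zer A \<longrightarrow> sub A y x = zer A \<longrightarrow> x = y) \<and>
     (\<forall>x\<in>carrier A. \<forall>y\<in>carrier A.
        sub A x (sub A x y) = sub A y (sub A y x))"

datatype trm = Var nat | Zero | Minus trm trm

fun eval :: "'a alg \<Rightarrow> (nat \<Rightarrow> 'a) \<Rightarrow> trm \<Rightarrow> 'a" where
  "eval A \<rho> (Var n) = \<rho> n"
| "eval A \<rho> Zero = zer A"
| "eval A \<rho> (Minus s t) = sub A (eval A \<rho> s) (eval A \<rho> t)"

type_synonym eqn = "trm \<times> trm"

definition sat :: "'a alg \<Rightarrow> eqn \<Rightarrow> bool" where
  "sat A e \<longleftrightarrow> (\<forall>\<rho>. (\<forall>n. \<rho> n \<in> carrier A) \<longrightarrow> eval A \<rho> (fst e) = eval A \<rho> (snd e))"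

definition Id_alg :: "'a alg \<Rightarrow> eqn set" where
  "Id_alg A = {e. sat A e}"

definition Mod_nat :: "eqn set \<Rightarrow> nat alg set" where
  "Mod_nat T = {A. is_cBCK A \<and> (\<forall>e\<in>T. sat A e)}"

definition Id_class :: "'a alg set \<Rightarrow> eqn set" where
  "Id_class C = {e. \<forall>A\<in>C. sat A e}"

text \<open>A variety of cBCK-algebras is represented by its (closed) equational theory T;
  by Birkhoff, a variety is determined by its countable members (its free algebra on
  countably many generators is countable), so closedness can be tested on algebras
  with carrier a subset of nat.\<close>
definition cBCK_variety :: "eqn set \<Rightarrow> bool" where
  "cBCK_variety T \<longleftrightarrow> T = Id_class (Mod_nat T)"

definition in_variety :: "eqn set \<Rightarrow> 'b alg \<Rightarrow> bool" where
  "in_variety T B \<longleftrightarrow> is_cBCK B \<and> (\<forall>e\<in>T. sat B e)"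

text \<open>K (theory T) is a cover of V(A) in the lattice of varieties of cBCK-algebras.
  Inclusion of varieties is reverse inclusion of theories.\<close>
definition is_cover_of_V :: "eqn set \<Rightarrow> 'a alg \<Rightarrow> bool" where
  "is_cover_of_V T A \<longleftrightarrow> cBCK_variety T \<and> T \<subset> Id_alg A \<and>
     (\<forall>T'. cBCK_variety T' \<and> T \<subseteq> T' \<and> T' \<subseteq> Id_alg A \<longrightarrow> T' = T \<or> T' = Id_alg A)"

definition is_congruence :: "'a alg \<Rightarrow> ('a \<times> 'a) set \<Rightarrow> bool" where
  "is_congruence A \<theta> \<longleftrightarrow> equiv (carrier A) \<theta> \<and>
     (\<forall>x y u v. (x,y) \<in> \<theta> \<longrightarrow> (u,v) \<in> \<theta> \<longrightarrow> (sub A x u, sub A y v) \<in> \<theta>)"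

text \<open>Nontrivial with a monolith: some pair of distinct elements lies in every
  congruence other than the identity relation.\<close>
definition subdirectly_irreducible :: "'a alg \<Rightarrow> bool" where
  "subdirectly_irreducible A \<longleftrightarrow>
     (\<exists>a\<in>carrier A. \<exists>b\<in>carrier A. a \<noteq> b \<and>
        (\<forall>\<theta>. is_congruence A \<theta> \<and> \<theta> \<noteq> Id_on (carrier A) \<longrightarrow> (a,b) \<in> \<theta>))"

definition lower_set :: "'a alg \<Rightarrow> 'a \<Rightarrow> 'a set" where
  "lower_set A a = {x \<in> carrier A. sub A x a = zer A}"

definition hgt :: "'a alg \<Rightarrow> 'a \<Rightarrow> enat" where
  "hgt A a = (if finite (lower_set A a) then enat (card (lower_set A a) - 1) else \<infinity>)"

definition hgt_alg :: "'a alg \<Rightarrow> enat" where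
  "hgt_alg A = (SUP b\<in>carrier A. hgt A b)"

end

theory Submission
  imports Defs "HOL-Library.Countable_Set"
begin

text \<open>Write \<open>x \<ominus> k y\<close> for \<open>y\<close> subtracted \<open>k\<close> times from \<open>x\<close>. If \<open>A\<close> is finite of height \<open>m\<close>,
  every lower set has at most \<open>m + 1\<close> elements, so the descending sequence \<open>x \<ominus> k y\<close> is
  constant from \<open>k = m\<close> on: \<open>A\<close> satisfies the identity \<open>E\<^sub>m: x \<ominus> (m + 1) y = x \<ominus> m y\<close>.

  Suppose \<open>b\<close> in \<open>B\<close> has height above \<open>m + 1\<close>. In a subdirectly irreducible cBCK-algebra every
  lower set is a chain. Choosing for \<open>y\<close> the least nonzero difference of \<open>m + 3\<close> elements below \<open>b\<close>, we get
  \<open>y \<preceq> b \<ominus> (m + 1) y\<close>, so \<open>B\<close> fails \<open>E\<^sub>m\<^sub>+\<^sub>1\<close>, while \<open>x = b \<ominus> (b \<ominus> (m + 1) y)\<close> generates the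
  subalgebra \<open>{x \<ominus> k y | k \<le> m + 1}\<close>, which has \<open>m + 2\<close> elements and satisfies \<open>E\<^sub>m\<^sub>+\<^sub>1\<close> but not
  \<open>E\<^sub>m\<close>. So the cover cut down by \<open>E\<^sub>m\<^sub>+\<^sub>1\<close> lies strictly between \<open>V(A)\<close> and the cover.\<close>

lemma finite_total_has_greatest:
  assumes "finite G" "G \<noteq> {}" "G \<subseteq> S"
    and total: "\<And>u v. u \<in> S \<Longrightarrow> v \<in> S \<Longrightarrow> R u v \<or> R v u"
    and trans: "\<And>u v w. u \<in> S \<Longrightarrow> v \<in> S \<Longrightarrow> w \<in> S \<Longrightarrow> R u v \<Longrightarrow> R v w \<Longrightarrow> R u w"
  shows "\<exists>p\<in>G. \<forall>q\<in>G. R q p"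
  using assms(1-3)
proof (induction G rule: finite_ne_induct)
  case (singleton x)
  then show ?case using total[of x x] by simp
next
  case (insert x G)
  then obtain p where p: "p \<in> G" "\<forall>q\<in>G. R q p" by blast
  have S: "x \<in> S" "p \<in> S" "G \<subseteq> S" using insert.prems p by auto
  show ?case
  proof (cases "R x p")
    case True
    then show ?thesis using p by blast
  next
    case False
    then have "R p x" using total[of x p] S by blast
    then have "\<forall>q\<in>G. R q x" using trans[of _ p x] S p by blast
    then show ?thesis using total[of x x] S by blast
  qed
qed

section \<open>Arithmetic of cBCK-algebras\<close>

locale cbck_alg =
  fixes C :: "'a set" and diff :: "'a \<Rightarrow> 'a \<Rightarrow> 'a" (infixl "\<ominus>" 70) and zero :: 'a ("\<zero>")
  assumes zero_closed: "\<zero> \<in> C"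
    and diff_closed: "x \<in> C \<Longrightarrow> y \<in> C \<Longrightarrow> x \<ominus> y \<in> C"
    and bck: "x \<in> C \<Longrightarrow> y \<in> C \<Longrightarrow> w \<in> C \<Longrightarrow> ((x \<ominus> y) \<ominus> (x \<ominus> w)) \<ominus> (w \<ominus> y) = \<zero>"
    and diff_zero: "x \<in> C \<Longrightarrow> x \<ominus> \<zero> = x"
    and zero_diff: "x \<in> C \<Longrightarrow> \<zero> \<ominus> x = \<zero>"
    and leq_antisym: "x \<in> C \<Longrightarrow> y \<in> C \<Longrightarrow> x \<ominus> y = \<zero> \<Longrightarrow> y \<ominus> x = \<zero> \<Longrightarrow> x = y"
    and commute: "x \<in> C \<Longrightarrow> y \<in> C \<Longrightarrow> x \<ominus> (x \<ominus> y) = y \<ominus> (y \<ominus> x)"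
begin

abbreviation leq :: "'a \<Rightarrow> 'a \<Rightarrow> bool" (infix "\<preceq>" 50) where
  "x \<preceq> y \<equiv> x \<ominus> y = \<zero>"

lemma diff_self: "x \<in> C \<Longrightarrow> x \<ominus> x = \<zero>"
  using bck[of x \<zero> \<zero>] by (simp add: diff_zero zero_closed diff_closed)

lemma meet_leq: "x \<in> C \<Longrightarrow> y \<in> C \<Longrightarrow> x \<ominus> (x \<ominus> y) \<preceq> y"
  using bck[of x \<zero> y] by (simp add: diff_zero zero_closed)

lemma leq_trans: "x \<in> C \<Longrightarrow> y \<in> C \<Longrightarrow> w \<in> C \<Longrightarrow> x \<preceq> y \<Longrightarrow> y \<preceq> w \<Longrightarrow> x \<preceq> w"
  using bck[of x w y] by (simp add: diff_zero diff_closed)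

lemma diff_antimono: "x \<in> C \<Longrightarrow> y \<in> C \<Longrightarrow> w \<in> C \<Longrightarrow> x \<preceq> y \<Longrightarrow> w \<ominus> y \<preceq> w \<ominus> x"
  using bck[of w y x] by (simp add: diff_zero diff_closed)

lemma diff_leq: "x \<in> C \<Longrightarrow> y \<in> C \<Longrightarrow> x \<ominus> y \<preceq> x"
  using diff_antimono[of \<zero> y x] by (simp add: diff_zero zero_diff zero_closed)

lemma diff_exchange:
  assumes "x \<in> C" "y \<in> C" "w \<in> C"
  shows "(x \<ominus> y) \<ominus> w = (x \<ominus> w) \<ominus> y"
proof -
  have le: "(x \<ominus> y) \<ominus> w \<preceq> (x \<ominus> w) \<ominus> y" if "x \<in> C" "y \<in> C" "w \<in> C" for x y w
  proof -
    have "(x \<ominus> (x \<ominus> w)) \<preceq> w" using meet_leq that by simp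
    then have "(x \<ominus> y) \<ominus> w \<preceq> (x \<ominus> y) \<ominus> (x \<ominus> (x \<ominus> w))"
      using diff_antimono that diff_closed by simp
    moreover have "(x \<ominus> y) \<ominus> (x \<ominus> (x \<ominus> w)) \<preceq> (x \<ominus> w) \<ominus> y"
      using bck that diff_closed by simp
    ultimately show ?thesis
      using leq_trans[of "(x \<ominus> y) \<ominus> w" "(x \<ominus> y) \<ominus> (x \<ominus> (x \<ominus> w))"] that diff_closed by simp
  qed
  show ?thesis using le[of x y w] le[of x w y] leq_antisym assms diff_closed by simp
qed

lemma diff_diff_right_leq:
  assumes "x \<in> C" "y \<in> C" "w \<in> C"
  shows "(x \<ominus> w) \<ominus> (y \<ominus> w) \<preceq> x \<ominus> y"
  using bck[of x w y] diff_exchange[of "x \<ominus> w" "x \<ominus> y" "y \<ominus> w"] assms diff_closed by simp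

lemma diff_mono:
  assumes "x \<in> C" "y \<in> C" "w \<in> C" "x \<preceq> y"
  shows "x \<ominus> w \<preceq> y \<ominus> w"
  using diff_diff_right_leq[of x y w] assms diff_zero diff_closed by simp

lemma leq_zero: "x \<in> C \<Longrightarrow> x \<preceq> \<zero> \<Longrightarrow> x = \<zero>"
  using diff_zero by simp

lemma diff_diff_of_leq: "x \<in> C \<Longrightarrow> y \<in> C \<Longrightarrow> y \<preceq> x \<Longrightarrow> x \<ominus> (x \<ominus> y) = y"
  using commute[of x y] diff_zero by simp

lemma leq_meet:
  assumes "w \<in> C" "x \<in> C" "y \<in> C" "w \<preceq> x" "w \<preceq> y"
  shows "w \<preceq> x \<ominus> (x \<ominus> y)"
proof -
  have "x \<ominus> (x \<ominus> w) \<preceq> x \<ominus> (x \<ominus> y)"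
    using assms diff_antimono[of "x \<ominus> y" "x \<ominus> w" x] diff_antimono[of w y x] diff_closed by simp
  then show ?thesis using assms diff_diff_of_leq by simp
qed

lemma diff_eq_diff_complements:
  assumes "x \<in> C" "y \<in> C" "t \<in> C" "x \<preceq> t"
  shows "x \<ominus> y = (t \<ominus> y) \<ominus> (t \<ominus> x)"
proof -
  have "(t \<ominus> y) \<ominus> (t \<ominus> x) = (t \<ominus> (t \<ominus> x)) \<ominus> y" using assms diff_exchange diff_closed by simp
  then show ?thesis using assms diff_diff_of_leq by simp
qed

lemma leq_diff_swap:
  assumes C: "p \<in> C" "q \<in> C" "c \<in> C" and "q \<preceq> p" "c \<preceq> p \<ominus> q"
  shows "q \<preceq> p \<ominus> c"
proof -
  have "q \<ominus> (p \<ominus> c) = (p \<ominus> (p \<ominus> q)) \<ominus> (p \<ominus> c)"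
    using assms diff_diff_of_leq by simp
  also have "\<dots> = (p \<ominus> (p \<ominus> c)) \<ominus> (p \<ominus> q)"
    using C diff_exchange diff_closed by simp
  finally have eq: "q \<ominus> (p \<ominus> c) = (p \<ominus> (p \<ominus> c)) \<ominus> (p \<ominus> q)" .
  have "(p \<ominus> (p \<ominus> c)) \<ominus> (p \<ominus> q) \<preceq> c \<ominus> (p \<ominus> q)"
    using C diff_mono meet_leq diff_closed by simp
  then show ?thesis using assms eq leq_zero diff_closed by simp
qed

text \<open>Prelinearity of the MV-algebra \<open>[\<zero>, t]\<close>. With \<open>m\<close> the meet of \<open>x\<close> and \<open>y\<close>, the complement
  \<open>n = t \<ominus> m\<close> is the join of \<open>t \<ominus> x\<close> and \<open>t \<ominus> y\<close>; both lie below \<open>n \<ominus> e\<close>, hence \<open>n \<preceq> n \<ominus> e\<close>.\<close>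
lemma leq_both_diffs_imp_zero:
  assumes C: "e \<in> C" "x \<in> C" "y \<in> C" "t \<in> C"
    and e: "e \<preceq> x \<ominus> y" "e \<preceq> y \<ominus> x" and t: "x \<preceq> t" "y \<preceq> t"
  shows "e = \<zero>"
proof -
  define m where "m = x \<ominus> (x \<ominus> y)"
  define n where "n = t \<ominus> m"
  have mC: "m \<in> C" and nC: "n \<in> C" using C diff_closed by (simp_all add: m_def n_def)
  have mx: "m \<preceq> x" and my: "m \<preceq> y" using C diff_leq meet_leq diff_closed by (simp_all add: m_def)
  have "x \<ominus> m = x \<ominus> y" using C diff_leq diff_diff_of_leq diff_closed by (simp add: m_def)
  moreover have "y \<ominus> m = y \<ominus> x"
    using C diff_leq diff_diff_of_leq diff_closed commute[of x y] by (simp add: m_def)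
  moreover have "x \<ominus> m = n \<ominus> (t \<ominus> x)" "y \<ominus> m = n \<ominus> (t \<ominus> y)"
    using diff_eq_diff_complements[of x m t] diff_eq_diff_complements[of y m t] C mC t
    by (simp_all add: n_def)
  ultimately have ex: "e \<preceq> n \<ominus> (t \<ominus> x)" and ey: "e \<preceq> n \<ominus> (t \<ominus> y)" using e by simp_all
  have "t \<ominus> x \<preceq> n" "t \<ominus> y \<preceq> n" using diff_antimono C mC mx my by (simp_all add: n_def)
  then have "t \<ominus> x \<preceq> n \<ominus> e" "t \<ominus> y \<preceq> n \<ominus> e"
    using leq_diff_swap ex ey C nC diff_closed by simp_all
  then have "t \<ominus> (n \<ominus> e) \<preceq> t \<ominus> (t \<ominus> x)" "t \<ominus> (n \<ominus> e) \<preceq> t \<ominus> (t \<ominus> y)"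
    using diff_antimono C nC diff_closed by simp_all
  then have "t \<ominus> (n \<ominus> e) \<preceq> x" "t \<ominus> (n \<ominus> e) \<preceq> y"
    using diff_diff_of_leq C t by simp_all
  then have "t \<ominus> (n \<ominus> e) \<preceq> m" using leq_meet C diff_closed nC by (simp add: m_def)
  then have "n \<preceq> t \<ominus> (t \<ominus> (n \<ominus> e))" using diff_antimono C mC nC diff_closed by (simp add: n_def)
  moreover have "n \<ominus> e \<preceq> t"
    using leq_trans[of "n \<ominus> e" n t] diff_leq C mC nC diff_closed by (simp add: n_def)
  ultimately have "n \<preceq> n \<ominus> e" using diff_diff_of_leq C nC diff_closed by simp
  moreover have "e \<preceq> n" using ex leq_trans[of e "n \<ominus> (t \<ominus> x)" n] diff_leq C nC diff_closed by simp
  ultimately show ?thesis using diff_diff_of_leq[of n e] C nC by simp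
qed

lemma diff_diff_diff_cancel:
  assumes "p \<in> C" "q \<in> C" "y \<in> C" "y \<preceq> q" "q \<preceq> p"
  shows "(p \<ominus> (q \<ominus> y)) \<ominus> y = p \<ominus> q"
proof -
  define e where "e = p \<ominus> (q \<ominus> y)"
  have eC: "e \<in> C" using assms diff_closed by (simp add: e_def)
  have "e \<ominus> (p \<ominus> q) = (p \<ominus> (p \<ominus> q)) \<ominus> (q \<ominus> y)"
    using assms diff_closed diff_exchange by (simp add: e_def)
  also have "\<dots> = y" using assms diff_diff_of_leq by simp
  finally have ey: "e \<ominus> (p \<ominus> q) = y" .
  have "p \<ominus> q \<preceq> e"
    using diff_antimono[of "q \<ominus> y" q p] assms diff_leq by (simp add: e_def diff_closed)
  then have "p \<ominus> q = e \<ominus> (e \<ominus> (p \<ominus> q))" using diff_diff_of_leq eC assms diff_closed by metis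
  then show ?thesis using ey by (simp add: e_def)
qed

definition iter_diff :: "'a \<Rightarrow> nat \<Rightarrow> 'a \<Rightarrow> 'a" where
  "iter_diff y n x = ((\<lambda>v. v \<ominus> y) ^^ n) x"

lemma iter_diff_0 [simp]: "iter_diff y 0 x = x"
  by (simp add: iter_diff_def)

lemma iter_diff_Suc [simp]: "iter_diff y (Suc n) x = iter_diff y n x \<ominus> y"
  by (simp add: iter_diff_def)

lemma iter_diff_add: "iter_diff y (n + k) x = iter_diff y n (iter_diff y k x)"
  by (simp add: iter_diff_def funpow_add)

lemma iter_diff_closed: "x \<in> C \<Longrightarrow> y \<in> C \<Longrightarrow> iter_diff y n x \<in> C"
  by (induction n) (simp_all add: diff_closed)

lemma iter_diff_diff:
  assumes "x \<in> C" "y \<in> C" "w \<in> C"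
  shows "iter_diff y n x \<ominus> w = iter_diff y n (x \<ominus> w)"
proof (induction n)
  case (Suc n)
  then show ?case
    using diff_exchange[of "iter_diff y n x" y w] assms iter_diff_closed by simp
qed simp

lemma iter_diff_leq: "x \<in> C \<Longrightarrow> y \<in> C \<Longrightarrow> iter_diff y n x \<preceq> x"
proof (induction n)
  case 0
  then show ?case by (simp add: diff_self)
next
  case (Suc n)
  then show ?case
    using leq_trans[of "iter_diff y n x \<ominus> y" "iter_diff y n x" x] diff_leq iter_diff_closed diff_closed
    by simp
qed

lemma iter_diff_antitone:
  assumes "x \<in> C" "y \<in> C" "l \<le> k"
  shows "iter_diff y k x \<preceq> iter_diff y l x"
proof -
  have "iter_diff y k x = iter_diff y (k - l) (iter_diff y l x)"
    using assms(3) iter_diff_add[of y "k - l" l x] by simp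
  then show ?thesis using assms iter_diff_leq iter_diff_closed by simp
qed

text \<open>Pigeonhole: the iterates of \<open>p\<close> descend inside the lower set of \<open>p\<close>.\<close>
lemma iter_diff_stable:
  assumes "p \<in> C" "q \<in> C"
    and fin: "finite {v \<in> C. v \<preceq> p}" and card: "card {v \<in> C. v \<preceq> p} \<le> Suc n"
  shows "iter_diff q (Suc n) p = iter_diff q n p"
proof -
  let ?t = "\<lambda>k. iter_diff q k p"
  have "?t ` {..Suc n} \<subseteq> {v \<in> C. v \<preceq> p}" using assms iter_diff_leq iter_diff_closed by auto
  then have "card (?t ` {..Suc n}) \<le> Suc n" using card_mono[OF fin] card le_trans by blast
  then have "\<not> inj_on ?t {..Suc n}" using card_image[of ?t "{..Suc n}"] by auto
  then obtain i0 j0 where h: "i0 \<le> Suc n" "j0 \<le> Suc n" "i0 \<noteq> j0" "?t i0 = ?t j0"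
    unfolding inj_on_def by auto
  obtain i j where ij: "i < j" "j \<le> Suc n" "?t i = ?t j"
  proof (cases "i0 < j0")
    case True
    then show ?thesis using that[of i0 j0] h by simp
  next
    case False
    then show ?thesis using that[of j0 i0] h by simp
  qed
  have "?t (Suc i) \<preceq> ?t i" using iter_diff_antitone[OF assms(1,2), of i "Suc i"] by simp
  moreover have "?t i \<preceq> ?t (Suc i)"
    using iter_diff_antitone[OF assms(1,2), of "Suc i" j] ij by (simp del: iter_diff_Suc)
  ultimately have step: "?t (Suc i) = ?t i"
    using leq_antisym[of "?t (Suc i)" "?t i"] assms iter_diff_closed by (simp del: iter_diff_Suc)
  have stab: "?t (i + k) = ?t i" for k by (induction k) (use step in simp_all)
  show ?thesis using stab[of "Suc n - i"] stab[of "n - i"] ij by simp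
qed

section \<open>Ideals, polars and subdirect irreducibility\<close>

definition ideal :: "'a set \<Rightarrow> bool" where
  "ideal I \<longleftrightarrow> I \<subseteq> C \<and> \<zero> \<in> I \<and> (\<forall>x\<in>C. \<forall>y\<in>I. x \<ominus> y \<in> I \<longrightarrow> x \<in> I)"

lemma ideal_down: "ideal I \<Longrightarrow> y \<in> I \<Longrightarrow> x \<in> C \<Longrightarrow> x \<preceq> y \<Longrightarrow> x \<in> I"
  unfolding ideal_def by (metis subsetD)

text \<open>\<open>x \<ominus> (x \<ominus> c)\<close> is the meet of \<open>x\<close> and \<open>c\<close>.\<close>
definition polar :: "'a \<Rightarrow> 'a set" where
  "polar c = {x \<in> C. x \<ominus> (x \<ominus> c) = \<zero>}"

lemma polar_ideal:
  assumes cC: "c \<in> C"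
  shows "ideal (polar c)"
  unfolding ideal_def
proof (intro conjI ballI impI)
  show "polar c \<subseteq> C" by (auto simp: polar_def)
  show "\<zero> \<in> polar c" using cC by (simp add: polar_def zero_closed zero_diff diff_closed)
  fix x a assume x: "x \<in> C" and a: "a \<in> polar c" and xa: "x \<ominus> a \<in> polar c"
  have aC: "a \<in> C" and ac: "a \<ominus> (a \<ominus> c) = \<zero>" using a by (auto simp: polar_def)
  have xaC: "x \<ominus> a \<in> C" and xac: "(x \<ominus> a) \<ominus> ((x \<ominus> a) \<ominus> c) = \<zero>"
    using xa by (auto simp: polar_def)
  define e where "e = x \<ominus> (x \<ominus> c)"
  have eC: "e \<in> C" using x cC by (simp add: e_def diff_closed)
  have ex: "e \<preceq> x" and ec: "e \<preceq> c" using x cC diff_leq meet_leq diff_closed by (simp_all add: e_def)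
  define f where "f = e \<ominus> (e \<ominus> a)"
  have fC: "f \<in> C" using eC aC by (simp add: f_def diff_closed)
  have "f \<preceq> e" and fa: "f \<preceq> a" using eC aC diff_leq meet_leq diff_closed by (simp_all add: f_def)
  then have "f \<preceq> c" using leq_trans fC eC cC ec by blast
  then have "f \<preceq> c \<ominus> (c \<ominus> a)" using leq_meet fC cC aC fa by blast
  then have "f = \<zero>" using commute[of a c] aC cC ac leq_zero fC by simp
  then have "e \<ominus> a \<preceq> x \<ominus> a" and "e \<preceq> e \<ominus> a"
    using diff_mono eC x aC ex by (simp_all add: f_def)
  then have "e \<preceq> x \<ominus> a" using leq_trans eC diff_closed aC x by blast
  then have "e \<preceq> (x \<ominus> a) \<ominus> ((x \<ominus> a) \<ominus> c)" using leq_meet eC xaC cC ec by blast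
  then have "e = \<zero>" using xac leq_zero eC by simp
  then show "x \<in> polar c" using x by (simp add: polar_def e_def)
qed

definition ideal_cong :: "'a set \<Rightarrow> ('a \<times> 'a) set" where
  "ideal_cong I = {(x, y). x \<in> C \<and> y \<in> C \<and> x \<ominus> y \<in> I \<and> y \<ominus> x \<in> I}"

lemma ideal_diff_trans:
  assumes I: "ideal I" and C: "p \<in> C" "q \<in> C" "r \<in> C" and "p \<ominus> q \<in> I" "q \<ominus> r \<in> I"
  shows "p \<ominus> r \<in> I"
proof -
  have "(p \<ominus> r) \<ominus> (p \<ominus> q) \<in> I"
    using ideal_down[OF I \<open>q \<ominus> r \<in> I\<close>] bck[of p r q] C diff_closed by simp
  then show ?thesis using I assms(5) C diff_closed unfolding ideal_def by blast
qed

lemma ideal_cong_equiv: "ideal I \<Longrightarrow> equiv C (ideal_cong I)"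
  by (rule equivI) (auto simp: ideal_cong_def refl_on_def sym_def trans_def ideal_def diff_self
      intro: ideal_diff_trans)

lemma ideal_cong_compatible:
  assumes I: "ideal I" and xy: "(x, y) \<in> ideal_cong I" and uv: "(u, v) \<in> ideal_cong I"
  shows "(x \<ominus> u, y \<ominus> v) \<in> ideal_cong I"
proof -
  have C: "x \<in> C" "y \<in> C" "u \<in> C" "v \<in> C" using xy uv by (auto simp: ideal_cong_def)
  have i: "x \<ominus> y \<in> I" "y \<ominus> x \<in> I" "u \<ominus> v \<in> I" "v \<ominus> u \<in> I"
    using xy uv by (auto simp: ideal_cong_def)
  have "(x \<ominus> u, y \<ominus> u) \<in> ideal_cong I"
    using ideal_down[OF I i(1)] ideal_down[OF I i(2)] diff_diff_right_leq C diff_closed by (simp add: ideal_cong_def)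
  moreover have "(y \<ominus> u, y \<ominus> v) \<in> ideal_cong I"
    using ideal_down[OF I i(4)] ideal_down[OF I i(3)] bck C diff_closed by (simp add: ideal_cong_def)
  ultimately show ?thesis
    using ideal_cong_equiv[OF I] unfolding equiv_def trans_def by blast
qed

lemma ideal_cong_neq_Id:
  assumes "ideal I" "a \<in> I" "a \<noteq> \<zero>"
  shows "ideal_cong I \<noteq> Id_on C"
proof -
  have "a \<in> C" using assms unfolding ideal_def by blast
  then have "(a, \<zero>) \<in> ideal_cong I"
    using assms by (auto simp: ideal_cong_def ideal_def diff_zero zero_diff zero_closed)
  then show ?thesis using assms(3) by auto
qed

definition in_all_nonzero_ideals :: "'a \<Rightarrow> bool" where
  "in_all_nonzero_ideals w \<longleftrightarrow> (\<forall>I. ideal I \<and> (\<exists>a\<in>I. a \<noteq> \<zero>) \<longrightarrow> w \<in> I)"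

definition is_chain :: "'a set \<Rightarrow> bool" where
  "is_chain S \<longleftrightarrow> S \<subseteq> C \<and> (\<forall>u\<in>S. \<forall>v\<in>S. u \<preceq> v \<or> v \<preceq> u)"

text \<open>If \<open>u\<close> and \<open>v\<close> were incomparable, the polar of \<open>v \<ominus> u\<close> would be a nonzero ideal
  containing \<open>u \<ominus> v\<close>; so \<open>w\<close> would lie in it, whence \<open>v \<ominus> u\<close> lies in the polar of \<open>w\<close>,
  which therefore contains \<open>w\<close> itself.\<close>
lemma is_chain_lower_set:
  assumes w: "w \<in> C" "w \<noteq> \<zero>" "in_all_nonzero_ideals w" and t: "t \<in> C"
  shows "is_chain {v \<in> C. v \<preceq> t}"
  unfolding is_chain_def
proof (intro conjI ballI)
  fix u v assume u: "u \<in> {v \<in> C. v \<preceq> t}" and v: "v \<in> {v \<in> C. v \<preceq> t}"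
  then have C: "u \<in> C" "v \<in> C" "u \<ominus> v \<in> C" "v \<ominus> u \<in> C" by (simp_all add: diff_closed)
  show "u \<preceq> v \<or> v \<preceq> u"
  proof (rule ccontr)
    assume "\<not> (u \<preceq> v \<or> v \<preceq> u)"
    then have uv: "u \<ominus> v \<noteq> \<zero>" and vu: "v \<ominus> u \<noteq> \<zero>" by auto
    let ?e = "(u \<ominus> v) \<ominus> ((u \<ominus> v) \<ominus> (v \<ominus> u))"
    have "?e \<preceq> u \<ominus> v" "?e \<preceq> v \<ominus> u" using C diff_leq meet_leq diff_closed by simp_all
    then have "?e = \<zero>" using leq_both_diffs_imp_zero[of ?e u v t] u v t C diff_closed by simp
    then have "u \<ominus> v \<in> polar (v \<ominus> u)" using C by (simp add: polar_def)
    then have "w \<in> polar (v \<ominus> u)"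
      using w uv polar_ideal C unfolding in_all_nonzero_ideals_def by blast
    then have "v \<ominus> u \<in> polar w" using commute[of w "v \<ominus> u"] w C by (simp add: polar_def)
    then have "w \<in> polar w"
      using w vu polar_ideal unfolding in_all_nonzero_ideals_def by blast
    then show False using w by (simp add: polar_def diff_self diff_zero)
  qed
qed (simp)

section \<open>Chains below a tall element\<close>

lemma chain_subset: "is_chain S \<Longrightarrow> T \<subseteq> S \<Longrightarrow> is_chain T"
  unfolding is_chain_def by blast

lemma chain_has_greatest:
  assumes "is_chain G" "finite G" "G \<noteq> {}"
  shows "\<exists>p\<in>G. \<forall>q\<in>G. q \<preceq> p"
proof (rule finite_total_has_greatest[OF assms(2,3) subset_refl])
  show "u \<preceq> v \<or> v \<preceq> u" if "u \<in> G" "v \<in> G" for u v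
    using assms(1) that unfolding is_chain_def by blast
  show "u \<preceq> w" if "u \<in> G" "v \<in> G" "w \<in> G" "u \<preceq> v" "v \<preceq> w" for u v w
    using leq_trans[of u v w] assms(1) that unfolding is_chain_def by blast
qed

lemma chain_has_least:
  assumes "is_chain G" "finite G" "G \<noteq> {}"
  shows "\<exists>p\<in>G. \<forall>q\<in>G. p \<preceq> q"
proof (rule finite_total_has_greatest[OF assms(2,3) subset_refl])
  show "v \<preceq> u \<or> u \<preceq> v" if "u \<in> G" "v \<in> G" for u v
    using assms(1) that unfolding is_chain_def by blast
  show "w \<preceq> u" if "u \<in> G" "v \<in> G" "w \<in> G" "v \<preceq> u" "w \<preceq> v" for u v w
    using leq_trans[of w v u] assms(1) that unfolding is_chain_def by blast
qed

lemma chain_below_diff: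
  assumes G: "is_chain G" "finite G" "G \<noteq> {}" and wy: "w \<in> C" "y \<in> C" and Gw: "\<forall>q\<in>G. q \<preceq> w"
    and y: "\<And>p q. p \<in> G \<Longrightarrow> q \<in> G \<Longrightarrow> p \<ominus> q \<noteq> \<zero> \<Longrightarrow> y \<preceq> p \<ominus> q"
  shows "\<exists>p\<in>G. \<forall>q\<in>G - {p}. q \<preceq> w \<ominus> y"
proof -
  obtain p where p: "p \<in> G" "\<forall>q\<in>G. q \<preceq> p" using chain_has_greatest G by blast
  have "q \<preceq> w \<ominus> y" if q: "q \<in> G - {p}" for q
  proof -
    have C: "p \<in> C" "q \<in> C" using p q G unfolding is_chain_def by auto
    have "q \<preceq> p" using p q by blast
    then have "p \<ominus> q \<noteq> \<zero>" using q leq_antisym C by blast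
    then have "w \<ominus> (p \<ominus> q) \<preceq> w \<ominus> y" using y p q diff_antimono C wy diff_closed by simp
    moreover have "p \<ominus> (p \<ominus> q) \<preceq> w \<ominus> (p \<ominus> q)" using diff_mono C wy Gw p diff_closed by simp
    moreover have "p \<ominus> (p \<ominus> q) = q" using diff_diff_of_leq C \<open>q \<preceq> p\<close> by simp
    ultimately show ?thesis using leq_trans[of q "w \<ominus> (p \<ominus> q)"] C wy diff_closed by simp
  qed
  then show ?thesis using p by blast
qed

lemma chain_below_iter_diff:
  assumes F: "is_chain F" "finite F" and bC: "b \<in> C" "y \<in> C" and Fb: "\<forall>q\<in>F. q \<preceq> b"
    and y: "\<And>p q. p \<in> F \<Longrightarrow> q \<in> F \<Longrightarrow> p \<ominus> q \<noteq> \<zero> \<Longrightarrow> y \<preceq> p \<ominus> q"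
    and j: "j < card F"
  shows "\<exists>G\<subseteq>F. card G = card F - j \<and> (\<forall>q\<in>G. q \<preceq> iter_diff y j b)"
  using j
proof (induction j)
  case 0
  then show ?case using Fb by auto
next
  case (Suc j)
  then obtain G where G: "G \<subseteq> F" "card G = card F - j" "\<forall>q\<in>G. q \<preceq> iter_diff y j b" by auto
  have "finite G" "G \<noteq> {}" using G F Suc.prems by (auto intro: finite_subset)
  moreover have "is_chain G" using chain_subset F G by blast
  moreover have "y \<preceq> p \<ominus> q" if "p \<in> G" "q \<in> G" "p \<ominus> q \<noteq> \<zero>" for p q
    using y G(1) that by blast
  ultimately obtain p where p: "p \<in> G" "\<forall>q\<in>G - {p}. q \<preceq> iter_diff y (Suc j) b"
    using chain_below_diff[of G "iter_diff y j b" y] G(3) bC iter_diff_closed by auto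
  then have "card (G - {p}) = card F - Suc j" using G \<open>finite G\<close> by simp
  then show ?case using p G by (metis Diff_subset order_trans)
qed

text \<open>Take for \<open>y\<close> the least nonzero difference of elements of \<open>F\<close>: each subtraction of \<open>y\<close>
  from \<open>b\<close> pushes at most the top element of \<open>F\<close> out of the lower set, so after \<open>N\<close> steps
  two elements of \<open>F\<close> remain below, and their difference dominates \<open>y\<close>.\<close>
lemma exists_iter_diff_bound:
  assumes b: "b \<in> C" and chain: "is_chain {v \<in> C. v \<preceq> b}"
    and F: "F \<subseteq> {v \<in> C. v \<preceq> b}" "finite F" "card F = Suc (Suc N)"
  shows "\<exists>y\<in>C. y \<noteq> \<zero> \<and> y \<preceq> iter_diff y N b"
proof -
  have Fchain: "is_chain F" using chain_subset[OF chain] F(1) by blast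
  define D where "D = (\<lambda>(p, q). p \<ominus> q) ` {(p, q) \<in> F \<times> F. p \<ominus> q \<noteq> \<zero>}"
  have "finite D" unfolding D_def
    by (rule finite_imageI, rule finite_subset[of _ "F \<times> F"]) (use F in auto)
  have D_below: "d \<in> C \<and> d \<preceq> b" if "d \<in> D" for d
  proof -
    obtain p q where d: "d = p \<ominus> q" "p \<in> F" "q \<in> F" using \<open>d \<in> D\<close> by (auto simp: D_def)
    then have "p \<in> C" "q \<in> C" "p \<preceq> b" using F by auto
    then show ?thesis using d diff_leq leq_trans[of "p \<ominus> q" p b] b diff_closed by simp
  qed
  then have "D \<subseteq> {v \<in> C. v \<preceq> b}" by blast
  then have "is_chain D" using chain_subset[OF chain] by blast
  obtain A where "A \<subseteq> F" "card A = 2" using F(3) obtain_subset_with_card_n[of 2 F] by auto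
  then obtain p0 q0 where pq0: "p0 \<in> F" "q0 \<in> F" "p0 \<noteq> q0" by (auto simp: card_2_iff)
  have memD: "p \<ominus> q \<in> D" if "p \<in> F" "q \<in> F" "p \<ominus> q \<noteq> \<zero>" for p q
    using that unfolding D_def by (auto intro: image_eqI[of _ _ "(p, q)"])
  have "p0 \<ominus> q0 \<noteq> \<zero> \<or> q0 \<ominus> p0 \<noteq> \<zero>" using leq_antisym[of p0 q0] pq0 F(1) by auto
  then have "p0 \<ominus> q0 \<in> D \<or> q0 \<ominus> p0 \<in> D" using memD pq0 by blast
  then have "D \<noteq> {}" by blast
  then obtain y where y: "y \<in> D" "\<forall>d\<in>D. y \<preceq> d"
    using chain_has_least \<open>is_chain D\<close> \<open>finite D\<close> by blast
  have yC: "y \<in> C" and yz: "y \<noteq> \<zero>" using y D_below by (auto simp: D_def)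
  have ymin: "y \<preceq> p \<ominus> q" if "p \<in> F" "q \<in> F" "p \<ominus> q \<noteq> \<zero>" for p q
    using y that by (auto simp: D_def)
  obtain G where G: "G \<subseteq> F" "card G = 2" "\<forall>q\<in>G. q \<preceq> iter_diff y N b"
    using chain_below_iter_diff[OF Fchain F(2) b yC _ ymin, of N] F by auto
  then obtain p q where pq: "p \<in> G" "q \<in> G" "p \<noteq> q" "q \<preceq> p"
    using Fchain unfolding is_chain_def by (metis card_2_iff insertI1 insertI2 subsetD)
  then have C: "p \<in> C" "q \<in> C" using G F by auto
  then have "p \<ominus> q \<noteq> \<zero>" using pq leq_antisym by blast
  then have "y \<preceq> p" using ymin pq G diff_leq leq_trans[of y "p \<ominus> q" p] yC C diff_closed by auto
  then have "y \<preceq> iter_diff y N b"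
    using leq_trans[of y p] G pq yC C iter_diff_closed b by simp
  then show ?thesis using yC yz by blast
qed

lemma iter_diff_diff_iter_diff:
  assumes xy: "x \<in> C" "y \<in> C" and top: "iter_diff y m x = y" and bot: "iter_diff y (Suc m) x = \<zero>"
    and "i + k \<le> Suc m"
  shows "iter_diff y i x \<ominus> iter_diff y (Suc m - k) x = iter_diff y (i + k) x"
  using assms(5)
proof (induction k)
  case 0
  then show ?case using bot diff_zero iter_diff_closed xy by (simp del: iter_diff_Suc)
next
  case (Suc k)
  let ?t = "\<lambda>j. iter_diff y j x"
  have k: "k \<le> m" "i \<le> m - k" using Suc.prems by simp_all
  have "y \<preceq> ?t (m - k)" using top iter_diff_antitone[OF xy, of "m - k" m] by simp
  moreover have "?t (m - k) \<preceq> ?t i" using iter_diff_antitone[OF xy] k by simp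
  ultimately have "(?t i \<ominus> (?t (m - k) \<ominus> y)) \<ominus> y = ?t i \<ominus> ?t (m - k)"
    using diff_diff_diff_cancel iter_diff_closed xy by simp
  moreover have "?t (m - k) \<ominus> y = ?t (Suc m - k)" using k by (simp add: Suc_diff_le)
  ultimately show ?case using Suc k by simp
qed

lemma iter_diff_image_closed:
  assumes xy: "x \<in> C" "y \<in> C" and top: "iter_diff y m x = y" and bot: "iter_diff y (Suc m) x = \<zero>"
    and ij: "i \<le> Suc m" "j \<le> Suc m"
  shows "iter_diff y i x \<ominus> iter_diff y j x \<in> (\<lambda>k. iter_diff y k x) ` {..Suc m}"
proof (cases "j \<le> i")
  case True
  then have "iter_diff y i x \<ominus> iter_diff y j x = iter_diff y (Suc m) x"
    using iter_diff_antitone[OF xy] bot by simp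
  then show ?thesis by (simp add: image_iff del: iter_diff_Suc) blast
next
  case False
  then have "iter_diff y i x \<ominus> iter_diff y j x = iter_diff y (i + (Suc m - j)) x"
    using iter_diff_diff_iter_diff[OF xy top bot, of i "Suc m - j"] ij by simp
  moreover have "i + (Suc m - j) \<le> Suc m" using False ij by simp
  ultimately show ?thesis by auto
qed

text \<open>The element \<open>x\<close> plays the role of the multiple \<open>(m + 1) y\<close>.\<close>
lemma iter_diff_multiple:
  assumes b: "b \<in> C" and y: "y \<in> C" "y \<noteq> \<zero>" "y \<preceq> iter_diff y (Suc m) b"
  defines "x \<equiv> b \<ominus> iter_diff y (Suc m) b"
  shows "x \<in> C" "iter_diff y m x = y" "iter_diff y (Suc m) x = \<zero>"
    and "iter_diff y (Suc (Suc m)) b \<noteq> iter_diff y (Suc m) b"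
proof -
  define a where "a = iter_diff y (Suc m) b"
  have aC: "a \<in> C" using iter_diff_closed b y by (simp add: a_def del: iter_diff_Suc)
  have x: "x = b \<ominus> a" unfolding x_def a_def ..
  show "x \<in> C" using aC b diff_closed x by simp
  have it: "iter_diff y j x = iter_diff y j b \<ominus> a" for j
    using iter_diff_diff b y(1) aC x by simp
  have ya: "y \<preceq> a" using y(3) unfolding a_def .
  have "iter_diff y (Suc m) x = a \<ominus> a" by (simp only: it a_def)
  then show "iter_diff y (Suc m) x = \<zero>" using aC diff_self by simp
  have "y \<preceq> iter_diff y m b"
    using leq_trans[of y a] ya y diff_leq iter_diff_closed b aC by (simp add: a_def)
  then show "iter_diff y m x = y" using it diff_diff_of_leq iter_diff_closed b y by (simp add: a_def)
  show "iter_diff y (Suc (Suc m)) b \<noteq> iter_diff y (Suc m) b"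
  proof
    assume "iter_diff y (Suc (Suc m)) b = iter_diff y (Suc m) b"
    then have "a \<ominus> y = a" using iter_diff_Suc[of y "Suc m" b] by (simp add: a_def del: iter_diff_Suc)
    then have "a \<ominus> (a \<ominus> y) = \<zero>" using aC diff_self by simp
    then show False using diff_diff_of_leq[of a y] aC y ya by simp
  qed
qed

end

section \<open>Identities and varieties\<close>

lemma is_cBCK_imp_cbck_alg: "is_cBCK A \<Longrightarrow> cbck_alg (carrier A) (sub A) (zer A)"
  unfolding is_cBCK_def cbck_alg_def by blast

fun iter_trm :: "nat \<Rightarrow> trm" where
  "iter_trm 0 = Var 0"
| "iter_trm (Suc k) = Minus (iter_trm k) (Var 1)"

text \<open>The identity \<open>x \<ominus> (n + 1) y = x \<ominus> n y\<close> in the variables \<open>x = Var 0\<close>, \<open>y = Var 1\<close>.\<close>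
definition stable_eqn :: "nat \<Rightarrow> eqn" where
  "stable_eqn n = (iter_trm (Suc n), iter_trm n)"

lemma eval_iter_trm: "eval A \<rho> (iter_trm k) = ((\<lambda>v. sub A v (\<rho> 1)) ^^ k) (\<rho> 0)"
  by (induction k) auto

lemma sat_stable_eqn_iff:
  "sat A (stable_eqn n) \<longleftrightarrow>
     (\<forall>p\<in>carrier A. \<forall>q\<in>carrier A. ((\<lambda>v. sub A v q) ^^ Suc n) p = ((\<lambda>v. sub A v q) ^^ n) p)"
proof
  assume sat: "sat A (stable_eqn n)"
  show "\<forall>p\<in>carrier A. \<forall>q\<in>carrier A. ((\<lambda>v. sub A v q) ^^ Suc n) p = ((\<lambda>v. sub A v q) ^^ n) p"
  proof (intro ballI)
    fix p q assume "p \<in> carrier A" "q \<in> carrier A"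
    then show "((\<lambda>v. sub A v q) ^^ Suc n) p = ((\<lambda>v. sub A v q) ^^ n) p"
      using sat unfolding sat_def stable_eqn_def
      by (auto simp: eval_iter_trm dest!: spec[of _ "\<lambda>i. if i = 0 then p else q"])
  qed
next
  assume stable: "\<forall>p\<in>carrier A. \<forall>q\<in>carrier A. ((\<lambda>v. sub A v q) ^^ Suc n) p = ((\<lambda>v. sub A v q) ^^ n) p"
  show "sat A (stable_eqn n)"
    unfolding sat_def stable_eqn_def
  proof (intro allI impI)
    fix \<rho> :: "nat \<Rightarrow> 'a" assume "\<forall>i. \<rho> i \<in> carrier A"
    then show "eval A \<rho> (fst (iter_trm (Suc n), iter_trm n)) = eval A \<rho> (snd (iter_trm (Suc n), iter_trm n))"
      using stable[rule_format, of "\<rho> 0" "\<rho> 1"] by (simp add: eval_iter_trm)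
  qed
qed

lemma sat_stable_eqn_of_card_lower_set:
  assumes "is_cBCK A" and "\<And>x. x \<in> carrier A \<Longrightarrow> finite (lower_set A x) \<and> card (lower_set A x) \<le> Suc n"
  shows "sat A (stable_eqn n)"
proof -
  interpret cbck_alg "carrier A" "sub A" "zer A" using is_cBCK_imp_cbck_alg assms(1) .
  show ?thesis
    using iter_diff_stable assms(2) unfolding sat_stable_eqn_iff by (simp add: iter_diff_def lower_set_def)
qed

lemma card_lower_set_of_hgt_le:
  "hgt A x \<le> enat n \<Longrightarrow> finite (lower_set A x) \<and> card (lower_set A x) \<le> Suc n"
  unfolding hgt_def by (cases "finite (lower_set A x)") auto

lemma sat_stable_eqn_of_hgt_alg_le: "is_cBCK A \<Longrightarrow> hgt_alg A \<le> enat n \<Longrightarrow> sat A (stable_eqn n)"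
  using sat_stable_eqn_of_card_lower_set card_lower_set_of_hgt_le
  unfolding hgt_alg_def by (metis SUP_le_iff)

lemma sat_stable_eqn_of_card_le:
  assumes "is_cBCK A" "finite (carrier A)" "card (carrier A) \<le> Suc n"
  shows "sat A (stable_eqn n)"
proof (rule sat_stable_eqn_of_card_lower_set[OF assms(1)])
  fix x
  have "lower_set A x \<subseteq> carrier A" by (auto simp: lower_set_def)
  then show "finite (lower_set A x) \<and> card (lower_set A x) \<le> Suc n"
    using assms(2,3) card_mono finite_subset le_trans by metis
qed

lemma large_subset_of_hgt_gt:
  assumes "\<not> hgt A b \<le> enat n"
  obtains F where "F \<subseteq> lower_set A b" "finite F" "card F = Suc (Suc n)"
proof (cases "finite (lower_set A b)")
  case True
  then have "Suc (Suc n) \<le> card (lower_set A b)" using assms unfolding hgt_def by simp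
  then show ?thesis using that obtain_subset_with_card_n True by (metis finite_subset)
next
  case False
  then show ?thesis using that infinite_arbitrarily_large by blast
qed

lemma eval_restrict_carrier: "eval (A\<lparr>carrier := S\<rparr>) \<rho> t = eval A \<rho> t"
  by (induction t) simp_all

lemma sat_restrict_carrier: "S \<subseteq> carrier A \<Longrightarrow> sat A e \<Longrightarrow> sat (A\<lparr>carrier := S\<rparr>) e"
  unfolding sat_def by (auto simp: eval_restrict_carrier)

lemma is_cBCK_restrict_carrier:
  assumes "is_cBCK A" "S \<subseteq> carrier A" "zer A \<in> S" "\<forall>x\<in>S. \<forall>y\<in>S. sub A x y \<in> S"
  shows "is_cBCK (A\<lparr>carrier := S\<rparr>)"
  using assms unfolding is_cBCK_def by (simp add: subset_iff)

definition transport_alg :: "('a \<Rightarrow> 'b) \<Rightarrow> 'a alg \<Rightarrow> 'b alg" where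
  "transport_alg f D =
     \<lparr>carrier = f ` carrier D,
      sub = (\<lambda>i j. f (sub D (inv_into (carrier D) f i) (inv_into (carrier D) f j))),
      zer = f (zer D)\<rparr>"

lemma sub_transport_alg:
  "inj_on f (carrier D) \<Longrightarrow> x \<in> carrier D \<Longrightarrow> y \<in> carrier D \<Longrightarrow>
     sub (transport_alg f D) (f x) (f y) = f (sub D x y)"
  by (simp add: transport_alg_def)

lemma eval_transport_alg:
  assumes "is_cBCK D" "inj_on f (carrier D)" "\<forall>i. \<rho> i \<in> carrier D"
  shows "eval (transport_alg f D) (f \<circ> \<rho>) t = f (eval D \<rho> t) \<and> eval D \<rho> t \<in> carrier D"
proof -
  interpret cbck_alg "carrier D" "sub D" "zer D" using is_cBCK_imp_cbck_alg assms(1) .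
  show ?thesis
    by (induction t) (use assms in \<open>simp_all add: sub_transport_alg diff_closed zero_closed,
        simp_all add: transport_alg_def\<close>)
qed

lemma sat_transport_alg_iff:
  fixes f :: "'a \<Rightarrow> 'b" and D :: "'a alg"
  assumes D: "is_cBCK D" and f: "inj_on f (carrier D)"
  shows "sat (transport_alg f D) e \<longleftrightarrow> sat D e"
proof
  assume s: "sat (transport_alg f D) e"
  show "sat D e" unfolding sat_def
  proof (intro allI impI)
    fix \<rho> :: "nat \<Rightarrow> 'a" assume \<rho>: "\<forall>i. \<rho> i \<in> carrier D"
    then have "eval (transport_alg f D) (f \<circ> \<rho>) (fst e) = eval (transport_alg f D) (f \<circ> \<rho>) (snd e)"
      using s unfolding sat_def by (simp add: transport_alg_def)
    then show "eval D \<rho> (fst e) = eval D \<rho> (snd e)"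
      using eval_transport_alg[OF D f \<rho>] f inj_onD by metis
  qed
next
  assume s: "sat D e"
  show "sat (transport_alg f D) e" unfolding sat_def
  proof (intro allI impI)
    fix \<rho> :: "nat \<Rightarrow> 'b" assume "\<forall>i. \<rho> i \<in> carrier (transport_alg f D)"
    then have \<rho>: "\<forall>i. (inv_into (carrier D) f \<circ> \<rho>) i \<in> carrier D"
      and "f \<circ> (inv_into (carrier D) f \<circ> \<rho>) = \<rho>"
      by (auto simp: transport_alg_def inv_into_into f_inv_into_f)
    then show "eval (transport_alg f D) \<rho> (fst e) = eval (transport_alg f D) \<rho> (snd e)"
      using s eval_transport_alg[OF D f \<rho>] unfolding sat_def by metis
  qed
qed

lemma is_cBCK_transport_alg:
  assumes "is_cBCK D" and f: "inj_on f (carrier D)"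
  shows "is_cBCK (transport_alg f D)"
proof -
  interpret cbck_alg "carrier D" "sub D" "zer D" using is_cBCK_imp_cbck_alg assms(1) .
  have inj: "f x = f y \<longleftrightarrow> x = y" if "x \<in> carrier D" "y \<in> carrier D" for x y
    using f that inj_on_eq_iff by metis
  have car: "carrier (transport_alg f D) = f ` carrier D" "zer (transport_alg f D) = f (zer D)"
    by (simp_all add: transport_alg_def)
  show ?thesis
    unfolding is_cBCK_def car
    by (auto simp: sub_transport_alg[OF f] inj diff_closed zero_closed bck diff_zero zero_diff commute
        intro: leq_antisym)
qed

lemma countable_cBCK_nat_copy:
  assumes "is_cBCK D" "countable (carrier D)"
  obtains D' :: "nat alg" where "is_cBCK D'" "\<And>e. sat D' e \<longleftrightarrow> sat D e"
proof -
  obtain f :: "'a \<Rightarrow> nat" where "inj_on f (carrier D)" using assms(2) by (rule countableE)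
  then show ?thesis
    using that is_cBCK_transport_alg sat_transport_alg_iff assms(1) by blast
qed

lemma cBCK_variety_Id_class_Mod_nat: "cBCK_variety (Id_class (Mod_nat X))"
proof -
  have "Mod_nat (Id_class (Mod_nat X)) = Mod_nat X"
  proof
    show "Mod_nat X \<subseteq> Mod_nat (Id_class (Mod_nat X))" by (auto simp: Mod_nat_def Id_class_def)
    have "X \<subseteq> Id_class (Mod_nat X)" by (auto simp: Mod_nat_def Id_class_def)
    then show "Mod_nat (Id_class (Mod_nat X)) \<subseteq> Mod_nat X" by (auto simp: Mod_nat_def)
  qed
  then show ?thesis unfolding cBCK_variety_def by simp
qed

text \<open>Cutting the cover down by an identity of \<open>A\<close> that fails in it gives a variety strictly below
  the cover and containing \<open>V(A)\<close>, hence \<open>V(A)\<close> itself.\<close>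
lemma cover_inter_identity:
  assumes cover: "is_cover_of_V T A"
    and A: "is_cBCK A" "countable (carrier A)" and e: "sat A e" "e \<notin> T"
    and C: "is_cBCK C" "countable (carrier C)" "\<forall>e'\<in>T. sat C e'" "sat C e"
  shows "Id_alg A \<subseteq> Id_alg C"
proof -
  define T' where "T' = Id_class (Mod_nat (insert e T))"
  have var: "cBCK_variety T" and TA: "T \<subset> Id_alg A"
    and cov: "\<And>T''. cBCK_variety T'' \<Longrightarrow> T \<subseteq> T'' \<Longrightarrow> T'' \<subseteq> Id_alg A \<Longrightarrow> T'' = T \<or> T'' = Id_alg A"
    using cover unfolding is_cover_of_V_def by blast+
  have "Mod_nat (insert e T) \<subseteq> Mod_nat T" by (auto simp: Mod_nat_def)
  then have "T \<subseteq> T'" using var unfolding T'_def cBCK_variety_def Id_class_def by blast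
  moreover have "T' \<subseteq> Id_alg A"
  proof
    fix e' assume "e' \<in> T'"
    obtain A' :: "nat alg" where A': "is_cBCK A'" "\<And>e. sat A' e \<longleftrightarrow> sat A e"
      using countable_cBCK_nat_copy A by blast
    then have "A' \<in> Mod_nat (insert e T)" using e TA by (auto simp: Mod_nat_def Id_alg_def)
    then have "sat A' e'" using \<open>e' \<in> T'\<close> by (simp add: T'_def Id_class_def)
    then show "e' \<in> Id_alg A" using A'(2) by (simp add: Id_alg_def)
  qed
  moreover have "e \<in> T'" by (simp add: T'_def Id_class_def Mod_nat_def)
  ultimately have T'A: "T' = Id_alg A" using cov cBCK_variety_Id_class_Mod_nat e(2) T'_def by blast
  obtain C' :: "nat alg" where C': "is_cBCK C'" "\<And>e. sat C' e \<longleftrightarrow> sat C e"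
    using countable_cBCK_nat_copy C by blast
  then have "C' \<in> Mod_nat (insert e T)" using C by (simp add: Mod_nat_def)
  then show ?thesis using C' T'A by (auto simp: T'_def Id_class_def Id_alg_def)
qed

lemma subdirectly_irreducible_monolith:
  assumes "is_cBCK B" "subdirectly_irreducible B"
  obtains w where "w \<in> carrier B" "w \<noteq> zer B"
    "cbck_alg.in_all_nonzero_ideals (carrier B) (sub B) (zer B) w"
proof -
  interpret cbck_alg "carrier B" "sub B" "zer B" using is_cBCK_imp_cbck_alg assms(1) .
  obtain p q where pq: "p \<in> carrier B" "q \<in> carrier B" "p \<noteq> q"
    and monolith: "\<And>\<theta>. is_congruence B \<theta> \<and> \<theta> \<noteq> Id_on (carrier B) \<Longrightarrow> (p, q) \<in> \<theta>"
    using assms(2) unfolding subdirectly_irreducible_def by blast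
  define w where "w = (if sub B p q \<noteq> zer B then sub B p q else sub B q p)"
  have "w \<in> carrier B" "w \<noteq> zer B" using pq diff_closed leq_antisym by (auto simp: w_def)
  moreover have "in_all_nonzero_ideals w"
    unfolding in_all_nonzero_ideals_def
  proof (intro allI impI, elim conjE bexE)
    fix I a assume I: "ideal I" and a: "a \<in> I" "a \<noteq> zer B"
    have "is_congruence B (ideal_cong I)"
      unfolding is_congruence_def using ideal_cong_equiv ideal_cong_compatible I by blast
    then have "(p, q) \<in> ideal_cong I" using monolith ideal_cong_neq_Id I a by blast
    then show "w \<in> I" by (simp add: ideal_cong_def w_def)
  qed
  ultimately show ?thesis using that by blast
qed

lemma tall_element_chain_subalgebra:
  assumes B: "is_cBCK B" "subdirectly_irreducible B"
    and b: "b \<in> carrier B" "\<not> hgt B b \<le> enat (Suc m)"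
  obtains S where "S \<subseteq> carrier B" "zer B \<in> S" "\<forall>p\<in>S. \<forall>q\<in>S. sub B p q \<in> S"
    "finite S" "card S \<le> Suc (Suc m)"
    "\<not> sat (B\<lparr>carrier := S\<rparr>) (stable_eqn m)" "\<not> sat B (stable_eqn (Suc m))"
proof -
  interpret cbck_alg "carrier B" "sub B" "zer B" using is_cBCK_imp_cbck_alg B(1) .
  obtain w where "w \<in> carrier B" "w \<noteq> zer B" "in_all_nonzero_ideals w"
    using subdirectly_irreducible_monolith B by blast
  then have chain: "is_chain {v \<in> carrier B. sub B v b = zer B}" by (rule is_chain_lower_set[OF _ _ _ b(1)])
  obtain F where F: "F \<subseteq> lower_set B b" "finite F" "card F = Suc (Suc (Suc m))"
    by (rule large_subset_of_hgt_gt[OF b(2)])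
  obtain y where y: "y \<in> carrier B" "y \<noteq> zer B" "sub B y (iter_diff y (Suc m) b) = zer B"
    using exists_iter_diff_bound[OF b(1) chain F[unfolded lower_set_def]] by blast
  define x where "x = sub B b (iter_diff y (Suc m) b)"
  note x = iter_diff_multiple[OF b(1) y, folded x_def]
  define S where "S = (\<lambda>k. iter_diff y k x) ` {..Suc m}"
  have "iter_diff y (Suc m) x \<in> S" "iter_diff y 0 x \<in> S" "iter_diff y m x \<in> S"
    unfolding S_def by (rule imageI, simp)+
  then have S0: "zer B \<in> S" and xS: "x \<in> S" and yS: "y \<in> S"
    using x(2,3) by (simp_all del: iter_diff_Suc)
  have "S \<subseteq> carrier B" using iter_diff_closed x(1) y(1) by (auto simp: S_def)
  moreover have "\<forall>p\<in>S. \<forall>q\<in>S. sub B p q \<in> S"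
    using iter_diff_image_closed[OF x(1) y(1) x(2) x(3)] by (auto simp: S_def)
  moreover have "finite S" "card S \<le> Suc (Suc m)"
    using card_image_le[of "{..Suc m}"] by (simp_all add: S_def)
  moreover have "\<not> sat (B\<lparr>carrier := S\<rparr>) (stable_eqn m)"
  proof -
    have "iter_diff y (Suc m) x \<noteq> iter_diff y m x" using x(2,3) y(2) by (simp del: iter_diff_Suc)
    then show ?thesis using xS yS unfolding sat_stable_eqn_iff iter_diff_def by auto
  qed
  moreover have "\<not> sat B (stable_eqn (Suc m))"
    using x(4) b(1) y(1) unfolding sat_stable_eqn_iff iter_diff_def by auto
  ultimately show ?thesis using that S0 by blast
qed

lemma tall_element_separating_subalgebra:
  fixes B :: "'a alg"
  assumes B: "is_cBCK B" "subdirectly_irreducible B"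
    and b: "b \<in> carrier B" "\<not> hgt B b \<le> enat (Suc m)"
  obtains C :: "'a alg" where "is_cBCK C" "finite (carrier C)" "\<And>e. sat B e \<Longrightarrow> sat C e"
    "sat C (stable_eqn (Suc m))" "\<not> sat C (stable_eqn m)" "\<not> sat B (stable_eqn (Suc m))"
proof -
  obtain S where S: "S \<subseteq> carrier B" "zer B \<in> S" "\<forall>p\<in>S. \<forall>q\<in>S. sub B p q \<in> S"
    "finite S" "card S \<le> Suc (Suc m)"
    "\<not> sat (B\<lparr>carrier := S\<rparr>) (stable_eqn m)" "\<not> sat B (stable_eqn (Suc m))"
    using tall_element_chain_subalgebra[OF B b] by blast
  show ?thesis
  proof (rule that)
    show C: "is_cBCK (B\<lparr>carrier := S\<rparr>)" using is_cBCK_restrict_carrier B(1) S(1-3) by blast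
    show "sat (B\<lparr>carrier := S\<rparr>) (stable_eqn (Suc m))"
      using sat_stable_eqn_of_card_le[OF C] S(4,5) by simp
    show "sat B e \<Longrightarrow> sat (B\<lparr>carrier := S\<rparr>) e" for e using sat_restrict_carrier S(1) by blast
  qed (use S(4,6,7) in simp_all)
qed

theorem mainTheorem6:
  fixes A :: "'a alg" and B :: "'b alg" and T :: "eqn set"
  assumes "is_cBCK A" and "finite (carrier A)" and "subdirectly_irreducible A"
    and "is_cover_of_V T A"
    and "in_variety T B" and "subdirectly_irreducible B"
  shows "hgt_alg B \<le> hgt_alg A + 1"
proof (cases "hgt_alg A")
  case (enat m)
  have B: "is_cBCK B" "\<forall>e\<in>T. sat B e" using assms(5) unfolding in_variety_def by auto
  show ?thesis
  proof (rule ccontr)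
    assume "\<not> hgt_alg B \<le> hgt_alg A + 1"
    then obtain b where b: "b \<in> carrier B" "\<not> hgt B b \<le> enat (Suc m)"
      using enat unfolding hgt_alg_def by (auto simp: SUP_le_iff one_enat_def)
    obtain C :: "'b alg" where C: "is_cBCK C" "finite (carrier C)" "\<And>e. sat B e \<Longrightarrow> sat C e"
      "sat C (stable_eqn (Suc m))" "\<not> sat C (stable_eqn m)" "\<not> sat B (stable_eqn (Suc m))"
      using tall_element_separating_subalgebra[OF B(1) assms(6) b] by blast
    have "Id_alg A \<subseteq> Id_alg C"
    proof (rule cover_inter_identity[OF assms(4,1) countable_finite[OF assms(2)] _ _ C(1)])
      show "sat A (stable_eqn (Suc m))" using sat_stable_eqn_of_hgt_alg_le[OF assms(1)] enat by simp
      show "stable_eqn (Suc m) \<notin> T" using B(2) C(6) by blast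
      show "countable (carrier C)" using C(2) by (rule countable_finite)
    qed (use B(2) C(3,4) in auto)
    moreover have "sat A (stable_eqn m)" using sat_stable_eqn_of_hgt_alg_le[OF assms(1)] enat by simp
    ultimately show False using C(5) by (auto simp: Id_alg_def)
  qed
qed simp

end
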